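(* Let $d\in \mathbb{N}$. Then the following are equivalent: (i) Every bilipschitz mapping $f\colon \mathbb{Z}^{d}\to \mathbb{R}^{d}$ admits a bilipschitz mapping $F\colon \mathbb{R}^{d}\to\mathbb{R}^{d}$ with $F|_{\mathbb{Z}^{d}}=f$. (ii) For every separated net $A$ of $\mathbb{R}^{d}$ and every bilipschitz mapping $f\colon A\to \mathbb{R}^{d}$ there is a bilipschitz mapping $F\colon \mathbb{R}^{d}\to\mathbb{R}^{d}$ with $F|_{A}=f$. Furthermore, if (i) holds with $\operatorname{bilip}(F)\leq C_{d}(\operatorname{bilip}(f))$ for some monotone increasing function $C_{d}\colon [1,\infty)\to [1,\infty)$, then (ii) holds with \[\operatorname{bilip}(F)\leq K\cdot C_{d}\big(24\sqrt{d}R^{2}K^{3}\operatorname{bilip}(f)\big),\] where $K:= 16\max\{\frac{3d}{r},1\}$ and $A$ is an $r$-separated $R$-net (i.e. $R$ and $r$ are the net and separation constants of $A$).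
   Context: $\|\cdot\|$ is the Euclidean norm. A set $A\subseteq\mathbb{R}^d$ is $r$-separated if $\|a-a'\|\geq r$ for all distinct $a,a'\in A$; it is an $R$-net if for every $x\in\mathbb{R}^d$ there is $a\in A$ with $\|x-a\|\leq R$; a separated net is a set that is an $r$-separated $R$-net for some $r,R>0$. For a mapping $f$, $\operatorname{Lip}(f)=\sup_{x\neq y}\|f(y)-f(x)\|/\|y-x\|$; for injective $f$, $\operatorname{bilip}(f)=\max\{\operatorname{Lip}(f),\operatorname{Lip}(f^{-1})\}$. $f$ is $L$-bilipschitz if $\operatorname{bilip}(f)\le L$, and bilipschitz if it is $L$-bilipschitz for some finite $L$. *)

theory Defs
  imports "HOL-Analysis.Analysis"
begin

definition int_lattice :: "'a::euclidean_space set" where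
  "int_lattice = {x. \<forall>i\<in>Basis. x \<bullet> i \<in> \<int>}"

definition separated :: "real \<Rightarrow> 'a::metric_space set \<Rightarrow> bool" where
  "separated r A \<longleftrightarrow> (\<forall>a\<in>A. \<forall>a'\<in>A. a \<noteq> a' \<longrightarrow> dist a a' \<ge> r)"

definition is_net :: "real \<Rightarrow> 'a::metric_space set \<Rightarrow> bool" where
  "is_net R A \<longleftrightarrow> (\<forall>x. \<exists>a\<in>A. dist x a \<le> R)"

definition separated_net :: "'a::metric_space set \<Rightarrow> bool" where
  "separated_net A \<longleftrightarrow> (\<exists>r>0. \<exists>R>0. separated r A \<and> is_net R A)"

text \<open>Lip(f) on A: supremum of difference quotients (meaningful when bounded).\<close>
definition Lip_on :: "'a::metric_space set \<Rightarrow> ('a \<Rightarrow> 'b::metric_space) \<Rightarrow> real" where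
  "Lip_on A f = (SUP p \<in> {(x, y). x \<in> A \<and> y \<in> A \<and> x \<noteq> y}. dist (f (snd p)) (f (fst p)) / dist (snd p) (fst p))"

definition bilip_on :: "'a::metric_space set \<Rightarrow> ('a \<Rightarrow> 'a) \<Rightarrow> real" where
  "bilip_on A f = max (Lip_on A f) (Lip_on (f ` A) (inv_into A f))"

definition bilipschitz_on :: "'a::metric_space set \<Rightarrow> ('a \<Rightarrow> 'a) \<Rightarrow> bool" where
  "bilipschitz_on A f \<longleftrightarrow> inj_on f A \<and>
     (\<exists>L. L-lipschitz_on A f \<and> L-lipschitz_on (f ` A) (inv_into A f))"

end

theory Submission
  imports Defs
begin

text \<open>(ii) implies (i) because the lattice is itself a separated net. For the converse, blow the net \<open>A\<close> up by the factor \<open>K\<close>: then \<open>K A\<close> is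
  \<open>K r\<close>-separated, which is large compared with the distance \<open>\<le> d/2\<close> from a point to the nearest
  lattice point, so rounding is injective on \<open>K A\<close>. Assign to every lattice point \<open>z\<close> a point
  \<open>\<alpha> z\<close> of \<open>K A\<close> at bounded distance, with \<open>\<alpha> (round b) = b\<close>, and put
  \<open>g z = K f (\<alpha> z / K) + (z - round (\<alpha> z)) / T\<close>; the small second term separates lattice points
  with the same \<open>\<alpha>\<close>, and \<open>g\<close> is \<open>T\<close>-bilipschitz on the lattice. If \<open>G\<close> is a bilipschitz
  extension of \<open>g\<close>, then \<open>F x = G (\<Psi> (K x)) / K\<close> extends \<open>f\<close>, where \<open>\<Psi>\<close> is a
  2-bilipschitz perturbation of the identity moving each point of \<open>K A\<close> to its rounding; \<open>\<Psi>\<close> is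
  built from tent-shaped bumps with disjoint supports around the points of \<open>K A\<close>.\<close>

lemma dist_le_Lip_on:
  assumes "L-lipschitz_on S f" "x \<in> S" "y \<in> S"
  shows "dist (f x) (f y) \<le> Lip_on S f * dist x y"
proof (cases "x = y")
  case False
  have bdd: "bdd_above ((\<lambda>p. dist (f (snd p)) (f (fst p)) / dist (snd p) (fst p)) `
      {(x, y). x \<in> S \<and> y \<in> S \<and> x \<noteq> y})"
    using assms(1) by (auto intro!: bdd_aboveI[where M = L] simp: lipschitz_on_def pos_divide_le_eq)
  have "dist (f x) (f y) / dist x y \<le> Lip_on S f"
    unfolding Lip_on_def using cSUP_upper[OF _ bdd, of "(y, x)"] False assms(2,3) by auto
  then show ?thesis
    using False by (simp add: pos_divide_le_eq)
qed simp

text \<open>Two distinct points are needed: on smaller sets \<^const>\<open>Lip_on\<close> is the supremum of the empty set.\<close>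
lemma Lip_on_le:
  assumes "x\<^sub>0 \<in> S" "y\<^sub>0 \<in> S" "x\<^sub>0 \<noteq> y\<^sub>0"
    and "\<And>x y. x \<in> S \<Longrightarrow> y \<in> S \<Longrightarrow> dist (f x) (f y) \<le> B * dist x y"
  shows "Lip_on S f \<le> B"
  unfolding Lip_on_def
proof (rule cSUP_least)
  show "{(x, y). x \<in> S \<and> y \<in> S \<and> x \<noteq> y} \<noteq> {}"
    using assms(1-3) by auto
qed (use assms(4) in \<open>auto simp: pos_divide_le_eq\<close>)

lemma bilipschitz_on_dist_le:
  assumes "bilipschitz_on S f" "x \<in> S" "y \<in> S"
  shows "dist (f x) (f y) \<le> bilip_on S f * dist x y"
    and "dist x y \<le> bilip_on S f * dist (f x) (f y)"
proof -
  obtain L where inj: "inj_on f S"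
    and L: "L-lipschitz_on S f" "L-lipschitz_on (f ` S) (inv_into S f)"
    using assms(1) unfolding bilipschitz_on_def by blast
  have "dist (f x) (f y) \<le> Lip_on S f * dist x y"
    using L(1) assms(2,3) by (rule dist_le_Lip_on)
  also have "\<dots> \<le> bilip_on S f * dist x y"
    unfolding bilip_on_def by (intro mult_right_mono) auto
  finally show "dist (f x) (f y) \<le> bilip_on S f * dist x y" .
  have "dist x y \<le> Lip_on (f ` S) (inv_into S f) * dist (f x) (f y)"
    using dist_le_Lip_on[OF L(2), of "f x" "f y"] assms(2,3) inj by simp
  also have "\<dots> \<le> bilip_on S f * dist (f x) (f y)"
    unfolding bilip_on_def by (intro mult_right_mono) auto
  finally show "dist x y \<le> bilip_on S f * dist (f x) (f y)" .
qed

lemma bilipschitz_onI: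
  assumes "x\<^sub>0 \<in> S" "y\<^sub>0 \<in> S" "x\<^sub>0 \<noteq> y\<^sub>0"
    and le: "\<And>x y. x \<in> S \<Longrightarrow> y \<in> S \<Longrightarrow> dist (f x) (f y) \<le> B * dist x y"
    and ge: "\<And>x y. x \<in> S \<Longrightarrow> y \<in> S \<Longrightarrow> dist x y \<le> B * dist (f x) (f y)"
  shows "bilipschitz_on S f" and "bilip_on S f \<le> B"
proof -
  have inj: "inj_on f S"
    using ge by (fastforce intro: inj_onI)
  have "0 < dist x\<^sub>0 y\<^sub>0"
    using assms(3) by simp
  with ge[OF assms(1,2)] have "0 \<le> B"
    by (smt (verit) mult_nonpos_nonneg zero_le_dist)
  then have "B-lipschitz_on S f" "B-lipschitz_on (f ` S) (inv_into S f)"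
    using le ge inj by (auto simp: lipschitz_on_def)
  then show "bilipschitz_on S f"
    using inj unfolding bilipschitz_on_def by blast
  have "f x\<^sub>0 \<noteq> f y\<^sub>0"
    using assms(1-3) inj by (auto dest: inj_onD)
  then have "Lip_on (f ` S) (inv_into S f) \<le> B"
    using assms(1,2) ge inj by (intro Lip_on_le[of "f x\<^sub>0" _ "f y\<^sub>0"]) auto
  moreover have "Lip_on S f \<le> B"
    using assms(1-3) le by (rule Lip_on_le)
  ultimately show "bilip_on S f \<le> B"
    unfolding bilip_on_def by simp
qed

lemma bilip_on_ge_1:
  assumes "bilipschitz_on S f" "x \<in> S" "y \<in> S" "x \<noteq> y"
  shows "1 \<le> bilip_on S f"
proof -
  let ?b = "bilip_on S f"
  have pos: "0 < dist x y"
    using assms(4) by simp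
  have le: "dist (f x) (f y) \<le> ?b * dist x y" and ge: "dist x y \<le> ?b * dist (f x) (f y)"
    using bilipschitz_on_dist_le[OF assms(1-3)] by auto
  then have "0 < ?b"
    using pos by (smt (verit) mult_nonpos_nonneg zero_le_dist)
  then have "dist x y \<le> (?b * ?b) * dist x y"
    using le ge by (smt (verit) mult.assoc mult_left_mono)
  then have "1 \<le> ?b * ?b"
    using pos by simp
  then show ?thesis
    using \<open>0 < ?b\<close> mult_strict_mono[of ?b 1 ?b 1] by force
qed

lemma dist_scaleR_scaleR: "dist (c *\<^sub>R x) (c *\<^sub>R y) = \<bar>c\<bar> * dist x y"
  for x y :: "'a::real_normed_vector"
  by (metis dist_norm norm_scaleR scaleR_right_diff_distrib)

lemma separated_scaleR:
  fixes A :: "'a::real_normed_vector set"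
  assumes "0 < c" "separated r A"
  shows "separated (c * r) (scaleR c ` A)"
  using assms unfolding separated_def by (auto simp: dist_scaleR_scaleR)

lemma is_net_scaleR:
  fixes A :: "'a::real_normed_vector set"
  assumes "0 < c" "is_net R A"
  shows "is_net (c * R) (scaleR c ` A)"
  unfolding is_net_def
proof
  fix x :: 'a
  obtain a where a: "a \<in> A" "dist (x /\<^sub>R c) a \<le> R"
    using assms(2) unfolding is_net_def by blast
  have "dist x (c *\<^sub>R a) = c * dist (x /\<^sub>R c) a"
    using dist_scaleR_scaleR[of c "x /\<^sub>R c" a] assms(1) by simp
  also have "\<dots> \<le> c * R"
    using a(2) assms(1) by simp
  finally show "\<exists>b\<in>scaleR c ` A. dist x b \<le> c * R"
    using a(1) by blast
qed

lemma is_net_two_points: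
  fixes A :: "'a::{real_normed_vector, perfect_space} set"
  assumes "is_net R A" "0 < R"
  obtains a b where "a \<in> A" "b \<in> A" "a \<noteq> b"
proof -
  obtain a where a: "a \<in> A"
    using assms(1) unfolding is_net_def by blast
  have "0 \<le> 3 * R"
    using assms(2) by simp
  then obtain x :: 'a where x: "dist a x = 3 * R"
    by (rule vector_choose_dist)
  obtain b where b: "b \<in> A" "dist x b \<le> R"
    using assms(1) unfolding is_net_def by blast
  have "a \<noteq> b"
    using x b(2) assms(2) by (auto simp: dist_commute)
  with a b(1) show thesis
    by (rule that)
qed

lemma separated_is_net_le:
  fixes A :: "'a::{real_normed_vector, perfect_space} set"
  assumes "separated r A" "is_net R A"
  shows "r \<le> 2 * R"
proof -
  obtain a where a: "a \<in> A" "dist 0 a \<le> R"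
    using assms(2) unfolding is_net_def by blast
  then have "0 \<le> R"
    using zero_le_dist[of 0 a] by linarith
  show ?thesis
  proof (cases "r \<le> 0")
    case False
    then have "0 \<le> r / 2"
      by simp
    then obtain x :: 'a where x: "dist a x = r / 2"
      by (rule vector_choose_dist)
    obtain b where b: "b \<in> A" "dist x b \<le> R"
      using assms(2) unfolding is_net_def by blast
    show ?thesis
    proof (cases "a = b")
      case False
      then have "r \<le> dist a b"
        using assms(1) a(1) b(1) unfolding separated_def by blast
      also have "\<dots> \<le> dist a x + dist x b"
        by (rule dist_triangle)
      finally show ?thesis
        using x b(2) by linarith
    qed (use x b in \<open>auto simp: dist_commute\<close>)
  qed (use \<open>0 \<le> R\<close> in auto)
qed

lemma separated_inj_on:
  assumes "separated Q B" "\<And>b. b \<in> B \<Longrightarrow> dist (q b) b \<le> \<delta>" "2 * \<delta> < Q"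
  shows "inj_on q B"
proof (rule inj_onI, rule ccontr)
  fix a b assume ab: "a \<in> B" "b \<in> B" "q a = q b" "a \<noteq> b"
  then have "Q \<le> dist a b"
    using assms(1) unfolding separated_def by blast
  also have "\<dots> \<le> dist (q a) a + dist (q b) b"
    using dist_triangle3[of a b "q a"] ab(3) by simp
  finally show False
    using assms(2)[OF ab(1)] assms(2)[OF ab(2)] assms(3) by linarith
qed

definition round_lattice :: "'a::euclidean_space \<Rightarrow> 'a" where
  "round_lattice x = (\<Sum>i\<in>Basis. of_int (round (x \<bullet> i)) *\<^sub>R i)"

lemma inner_round_lattice: "i \<in> Basis \<Longrightarrow> round_lattice x \<bullet> i = of_int (round (x \<bullet> i))"
  unfolding round_lattice_def by (simp add: inner_sum_left inner_Basis if_distrib cong: if_cong)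

lemma round_lattice_in_int_lattice: "round_lattice x \<in> int_lattice"
  unfolding int_lattice_def by (auto simp: inner_round_lattice)

lemma dist_round_lattice_le: "dist (round_lattice x) x \<le> DIM('a) / 2"
  for x :: "'a::euclidean_space"
proof -
  have "dist (round_lattice x) x \<le> (\<Sum>i\<in>(Basis::'a set). \<bar>(round_lattice x - x) \<bullet> i\<bar>)"
    unfolding dist_norm by (rule norm_le_l1)
  also have "\<dots> \<le> (\<Sum>i\<in>(Basis::'a set). 1 / 2)"
  proof (rule sum_mono)
    fix i :: 'a assume "i \<in> Basis"
    then show "\<bar>(round_lattice x - x) \<bullet> i\<bar> \<le> 1 / 2"
      using of_int_round_abs_le[of "x \<bullet> i"] by (simp add: inner_diff_left inner_round_lattice)
  qed
  finally show ?thesis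
    by simp
qed

lemma separated_int_lattice: "separated 1 int_lattice"
  unfolding separated_def
proof (intro ballI impI)
  fix x y :: 'a assume xy: "x \<in> int_lattice" "y \<in> int_lattice" "x \<noteq> y"
  then obtain i where i: "i \<in> Basis" "(x - y) \<bullet> i \<noteq> 0"
    by (metis euclidean_eqI inner_diff_left right_minus_eq)
  have "(x - y) \<bullet> i \<in> \<int>"
    using xy(1,2) i(1) unfolding int_lattice_def by (simp add: inner_diff_left)
  then have "1 \<le> \<bar>(x - y) \<bullet> i\<bar>"
    using i(2) by (rule Ints_nonzero_abs_ge1)
  also have "\<dots> \<le> norm (x - y)"
    using i(1) by (rule Basis_le_norm)
  finally show "1 \<le> dist x y"
    by (simp add: dist_norm)
qed

lemma is_net_int_lattice: "is_net (DIM('a) / 2) (int_lattice :: 'a::euclidean_space set)"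
  unfolding is_net_def
proof
  fix x :: 'a
  show "\<exists>a\<in>int_lattice. dist x a \<le> DIM('a) / 2"
  proof
    show "dist x (round_lattice x) \<le> DIM('a) / 2"
      using dist_round_lattice_le[of x] dist_commute[of x "round_lattice x"] by linarith
  qed (rule round_lattice_in_int_lattice)
qed

lemma separated_net_int_lattice: "separated_net (int_lattice :: 'a::euclidean_space set)"
proof -
  have "0 < real DIM('a) / 2"
    by simp
  with separated_int_lattice is_net_int_lattice show ?thesis
    unfolding separated_net_def using zero_less_one by blast
qed

text \<open>Tents of height \<open>v a\<close> over the balls of radius \<open>\<rho>\<close> around the points \<open>a \<in> P\<close>; for
  \<open>2 \<rho>\<close>-separated \<open>P\<close> the balls are disjoint and \<open>SOME\<close> picks the unique centre.\<close>
definition bump_extension :: "real \<Rightarrow> 'a::metric_space set \<Rightarrow> ('a \<Rightarrow> 'b::real_normed_vector) \<Rightarrow> 'a \<Rightarrow> 'b"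
  where "bump_extension \<rho> P v y =
    (if \<exists>a\<in>P. dist y a < \<rho>
     then let a = SOME a. a \<in> P \<and> dist y a < \<rho> in (1 - dist y a / \<rho>) *\<^sub>R v a
     else 0)"

lemma bump_extension_eq:
  assumes "separated (2 * \<rho>) P" "a \<in> P" "dist y a < \<rho>"
  shows "bump_extension \<rho> P v y = (1 - dist y a / \<rho>) *\<^sub>R v a"
proof -
  have unique: "b = a" if "b \<in> P" "dist y b < \<rho>" for b
  proof (rule ccontr)
    assume "b \<noteq> a"
    then have "2 * \<rho> \<le> dist b a"
      using assms(1,2) that(1) unfolding separated_def by blast
    moreover have "dist b a \<le> dist y b + dist y a"
      by (rule dist_triangle3)
    ultimately show False
      using assms(3) that(2) by linarith
  qed
  have "(SOME b. b \<in> P \<and> dist y b < \<rho>) = a"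
    using someI[of "\<lambda>b. b \<in> P \<and> dist y b < \<rho>" a] assms(2,3) unique by blast
  then show ?thesis
    using assms(2,3) unfolding bump_extension_def by auto
qed

lemma bump_extension_eq_0:
  assumes "\<And>a. a \<in> P \<Longrightarrow> \<rho> \<le> dist y a"
  shows "bump_extension \<rho> P v y = 0"
proof -
  have "\<not> (\<exists>a\<in>P. dist y a < \<rho>)"
    using assms by (meson not_less)
  then show ?thesis
    unfolding bump_extension_def by simp
qed

lemma norm_bump_extension_le:
  assumes "separated (2 * \<rho>) P" "a \<in> P" "dist y a < \<rho>" "norm (v a) \<le> c * \<rho>"
  shows "norm (bump_extension \<rho> P v y) \<le> c * (\<rho> - dist y a)"
proof -
  have "0 < \<rho>"
    using assms(3) by (meson zero_le_dist order_le_less_trans)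
  then have t: "0 \<le> 1 - dist y a / \<rho>"
    using assms(3) by simp
  have "norm (bump_extension \<rho> P v y) = (1 - dist y a / \<rho>) * norm (v a)"
    by (simp only: bump_extension_eq[OF assms(1-3)] norm_scaleR abs_of_nonneg[OF t])
  also have "\<dots> \<le> (1 - dist y a / \<rho>) * (c * \<rho>)"
    using assms(4) t by (rule mult_left_mono)
  also have "\<dots> = c * (\<rho> - dist y a)"
    using \<open>0 < \<rho>\<close> by (simp add: field_simps)
  finally show ?thesis .
qed

lemma bump_extension_dist_le_same:
  assumes sep: "separated (2 * \<rho>) P" and "0 \<le> c" and v: "norm (v a) \<le> c * \<rho>"
    and "a \<in> P" "dist x a < \<rho>" "dist y a < \<rho>"
  shows "dist (bump_extension \<rho> P v x) (bump_extension \<rho> P v y) \<le> c * dist x y"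
proof -
  have "0 < \<rho>"
    using assms(5) by (meson zero_le_dist order_le_less_trans)
  have "bump_extension \<rho> P v x - bump_extension \<rho> P v y = ((dist y a - dist x a) / \<rho>) *\<^sub>R v a"
    using bump_extension_eq[OF sep \<open>a \<in> P\<close>, where v = v] assms(5,6)
    by (simp add: algebra_simps diff_divide_distrib)
  then have "dist (bump_extension \<rho> P v x) (bump_extension \<rho> P v y) =
      \<bar>dist y a - dist x a\<bar> / \<rho> * norm (v a)"
    using \<open>0 < \<rho>\<close> by (simp add: dist_norm)
  also have "\<dots> \<le> \<bar>dist y a - dist x a\<bar> / \<rho> * (c * \<rho>)"
    using v \<open>0 < \<rho>\<close> by (intro mult_left_mono) auto
  also have "\<dots> = c * \<bar>dist y a - dist x a\<bar>"
    using \<open>0 < \<rho>\<close> by simp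
  also have "\<dots> \<le> c * dist x y"
    using \<open>0 \<le> c\<close> dist_triangle3[of x a y] dist_triangle3[of y a x]
    by (intro mult_left_mono) (auto simp: dist_commute)
  finally show ?thesis .
qed

text \<open>Bumps around distinct centres have disjoint supports, so a point in one bump is at least as far
  from a point outside it as the sum of their distances to the boundaries of their bumps.\<close>
lemma bump_extension_dist_le_near:
  assumes sep: "separated (2 * \<rho>) P" and "0 \<le> c" and v: "\<And>a. a \<in> P \<Longrightarrow> norm (v a) \<le> c * \<rho>"
    and a: "a \<in> P" "dist x a < \<rho>"
  shows "dist (bump_extension \<rho> P v x) (bump_extension \<rho> P v y) \<le> c * dist x y"
proof -
  let ?\<psi> = "bump_extension \<rho> P v"
  have x: "norm (?\<psi> x) \<le> c * (\<rho> - dist x a)"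
    using sep a v[OF a(1)] by (rule norm_bump_extension_le)
  consider (same) "dist y a < \<rho>" | (other) b where "b \<in> P" "dist y b < \<rho>" "\<rho> \<le> dist y a"
    | (outside) "\<And>b. b \<in> P \<Longrightarrow> \<rho> \<le> dist y b"
    by (cases "dist y a < \<rho>"; cases "\<exists>b\<in>P. dist y b < \<rho>") (auto simp: not_less)
  then show ?thesis
  proof cases
    case same
    show ?thesis
      using sep \<open>0 \<le> c\<close> v[OF a(1)] a same by (rule bump_extension_dist_le_same)
  next
    case (other b)
    have "2 * \<rho> \<le> dist a b"
      using sep a(1) other unfolding separated_def by fastforce
    moreover have "dist a b \<le> dist x a + dist x y + dist y b"
      using dist_triangle[of a b x] dist_triangle[of x b y] by (simp add: dist_commute)
    ultimately have "c * (\<rho> - dist x a) + c * (\<rho> - dist y b) \<le> c * dist x y"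
      using \<open>0 \<le> c\<close> by (simp add: distrib_left[symmetric] mult_left_mono)
    moreover have "norm (?\<psi> y) \<le> c * (\<rho> - dist y b)"
      using sep other(1,2) v[OF other(1)] by (rule norm_bump_extension_le)
    ultimately show ?thesis
      using x norm_triangle_ineq4[of "?\<psi> x" "?\<psi> y"] by (simp add: dist_norm)
  next
    case outside
    then have "?\<psi> y = 0"
      by (rule bump_extension_eq_0)
    moreover have "c * (\<rho> - dist x a) \<le> c * dist x y"
      using outside[OF a(1)] \<open>0 \<le> c\<close> dist_triangle3[of y a x]
      by (intro mult_left_mono) (auto simp: dist_commute)
    ultimately show ?thesis
      using x by (simp add: dist_norm)
  qed
qed

lemma lipschitz_on_bump_extension:
  assumes "separated (2 * \<rho>) P" "0 \<le> c" "\<And>a. a \<in> P \<Longrightarrow> norm (v a) \<le> c * \<rho>"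
  shows "c-lipschitz_on UNIV (bump_extension \<rho> P v)"
proof (rule lipschitz_onI)
  fix x y
  show "dist (bump_extension \<rho> P v x) (bump_extension \<rho> P v y) \<le> c * dist x y"
  proof (cases "\<exists>a\<in>P. dist x a < \<rho> \<or> dist y a < \<rho>")
    case True
    then obtain a where "a \<in> P" "dist x a < \<rho> \<or> dist y a < \<rho>"
      by blast
    then show ?thesis
      using bump_extension_dist_le_near[OF assms, where a = a and x = x and y = y]
        bump_extension_dist_le_near[OF assms, where a = a and x = y and y = x]
      by (auto simp: dist_commute)
  next
    case False
    then have "bump_extension \<rho> P v x = 0" "bump_extension \<rho> P v y = 0"
      by (auto intro!: bump_extension_eq_0 simp: not_less)
    then show ?thesis
      using assms(2) by simp
  qed
qed (rule assms(2))

lemma near_identity_interpolation: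
  fixes \<Phi> :: "'a::real_normed_vector \<Rightarrow> 'a"
  assumes sep: "separated (2 * \<rho>) P" and "0 < \<rho>" and \<Phi>: "\<And>a. a \<in> P \<Longrightarrow> dist (\<Phi> a) a \<le> \<rho> / 2"
  obtains \<Psi> where "\<And>a. a \<in> P \<Longrightarrow> \<Psi> a = \<Phi> a"
    and "\<And>x y. dist (\<Psi> x) (\<Psi> y) \<le> 2 * dist x y" and "\<And>x y. dist x y \<le> 2 * dist (\<Psi> x) (\<Psi> y)"
proof
  define \<psi> where "\<psi> = bump_extension \<rho> P (\<lambda>a. \<Phi> a - a)"
  have "(1/2)-lipschitz_on UNIV \<psi>"
    unfolding \<psi>_def using sep by (rule lipschitz_on_bump_extension) (use \<Phi> in \<open>auto simp: dist_norm\<close>)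
  then have \<psi>: "norm (\<psi> x - \<psi> y) \<le> dist x y / 2" for x y
    by (auto dest: lipschitz_onD simp: dist_norm)
  show "(\<lambda>x. x + \<psi> x) a = \<Phi> a" if "a \<in> P" for a
    using bump_extension_eq[OF sep that, where y = a and v = "\<lambda>a. \<Phi> a - a"] \<open>0 < \<rho>\<close>
    unfolding \<psi>_def by simp
  fix x y :: 'a
  have "dist (x + \<psi> x) (y + \<psi> y) \<le> norm (x - y) + norm (\<psi> x - \<psi> y)"
    unfolding dist_norm by (metis add_diff_add norm_triangle_ineq)
  then show "dist (x + \<psi> x) (y + \<psi> y) \<le> 2 * dist x y"
    using \<psi>[of x y] norm_ge_zero[of "x - y"] unfolding dist_norm by linarith
  have "x - y = ((x + \<psi> x) - (y + \<psi> y)) - (\<psi> x - \<psi> y)"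
    by (simp add: algebra_simps)
  then have "norm (x - y) \<le> dist (x + \<psi> x) (y + \<psi> y) + norm (\<psi> x - \<psi> y)"
    unfolding dist_norm by (metis norm_triangle_ineq4)
  then show "dist x y \<le> 2 * dist (x + \<psi> x) (y + \<psi> y)"
    using \<psi>[of x y] unfolding dist_norm by linarith
qed

lemma bilipschitz_on_rescaled_compose:
  fixes G \<Psi> :: "'a::{real_normed_vector, perfect_space} \<Rightarrow> 'a"
  assumes "0 < K" and G: "bilipschitz_on UNIV G"
    and \<Psi>: "\<And>x y. dist (\<Psi> x) (\<Psi> y) \<le> 2 * dist x y" "\<And>x y. dist x y \<le> 2 * dist (\<Psi> x) (\<Psi> y)"
  defines "F \<equiv> \<lambda>x. G (\<Psi> (K *\<^sub>R x)) /\<^sub>R K"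
  shows "bilipschitz_on UNIV F" and "bilip_on UNIV F \<le> 2 * bilip_on UNIV G"
proof -
  let ?b = "bilip_on UNIV G"
  obtain e :: 'a where "norm e = 1"
    using vector_choose_size[of 1] by auto
  then have "0 \<noteq> e"
    by auto
  then have "0 \<le> ?b"
    using bilip_on_ge_1[OF G] by fastforce
  have F: "K * dist (F x) (F y) = dist (G (\<Psi> (K *\<^sub>R x))) (G (\<Psi> (K *\<^sub>R y)))" for x y
  proof -
    have "dist (F x) (F y) = inverse K * dist (G (\<Psi> (K *\<^sub>R x))) (G (\<Psi> (K *\<^sub>R y)))"
      using dist_scaleR_scaleR[of "inverse K"] \<open>0 < K\<close> unfolding F_def by simp
    then show ?thesis
      using \<open>0 < K\<close> by simp
  qed
  have K: "dist (K *\<^sub>R x) (K *\<^sub>R y) = K * dist x y" for x y :: 'a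
    using dist_scaleR_scaleR[of K] \<open>0 < K\<close> by simp
  have le: "dist (F x) (F y) \<le> 2 * ?b * dist x y" for x y
  proof -
    have "K * dist (F x) (F y) \<le> ?b * dist (\<Psi> (K *\<^sub>R x)) (\<Psi> (K *\<^sub>R y))"
      unfolding F using G by (rule bilipschitz_on_dist_le) auto
    also have "\<dots> \<le> ?b * (2 * (K * dist x y))"
      using \<Psi>(1)[of "K *\<^sub>R x" "K *\<^sub>R y"] \<open>0 \<le> ?b\<close> K by (intro mult_left_mono) auto
    finally have "K * dist (F x) (F y) \<le> K * (2 * ?b * dist x y)"
      by (simp add: ac_simps)
    then show ?thesis
      using \<open>0 < K\<close> by simp
  qed
  have ge: "dist x y \<le> 2 * ?b * dist (F x) (F y)" for x y
  proof -
    have "K * dist x y \<le> 2 * dist (\<Psi> (K *\<^sub>R x)) (\<Psi> (K *\<^sub>R y))"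
      using \<Psi>(2)[of "K *\<^sub>R x" "K *\<^sub>R y"] K[of x y] by simp
    also have "\<dots> \<le> 2 * (?b * (K * dist (F x) (F y)))"
      unfolding F using G by (intro mult_left_mono bilipschitz_on_dist_le) auto
    finally have "K * dist x y \<le> K * (2 * ?b * dist (F x) (F y))"
      by (simp add: ac_simps)
    then show ?thesis
      using \<open>0 < K\<close> by simp
  qed
  show "bilipschitz_on UNIV F" "bilip_on UNIV F \<le> 2 * ?b"
    using bilipschitz_onI[OF UNIV_I UNIV_I \<open>0 \<noteq> e\<close> le ge] by auto
qed

lemma rescaled_near_identity_extension:
  fixes A :: "'a::{real_normed_vector, perfect_space} set" and f G \<Phi> :: "'a \<Rightarrow> 'a"
  assumes "0 < K" "0 < r" "separated r A"
    and \<Phi>: "\<And>a. a \<in> A \<Longrightarrow> dist (\<Phi> (K *\<^sub>R a)) (K *\<^sub>R a) \<le> K * r / 4"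
    and G: "bilipschitz_on UNIV G" "\<And>a. a \<in> A \<Longrightarrow> G (\<Phi> (K *\<^sub>R a)) = K *\<^sub>R f a"
  shows "\<exists>F. bilipschitz_on UNIV F \<and> (\<forall>a\<in>A. F a = f a) \<and> bilip_on UNIV F \<le> 2 * bilip_on UNIV G"
proof -
  have "separated (2 * (K * r / 2)) (scaleR K ` A)"
    using separated_scaleR[OF assms(1,3)] by simp
  moreover have "0 < K * r / 2"
    using assms(1,2) by simp
  moreover have "dist (\<Phi> b) b \<le> K * r / 2 / 2" if "b \<in> scaleR K ` A" for b
    using \<Phi> that by auto
  ultimately obtain \<Psi> where \<Psi>: "\<And>a. a \<in> A \<Longrightarrow> \<Psi> (K *\<^sub>R a) = \<Phi> (K *\<^sub>R a)"
    "\<And>x y. dist (\<Psi> x) (\<Psi> y) \<le> 2 * dist x y" "\<And>x y. dist x y \<le> 2 * dist (\<Psi> x) (\<Psi> y)"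
    by (rule near_identity_interpolation) auto
  have "G (\<Psi> (K *\<^sub>R a)) /\<^sub>R K = f a" if "a \<in> A" for a
    using \<Psi>(1)[OF that] G(2)[OF that] assms(1) by simp
  then show ?thesis
    using bilipschitz_on_rescaled_compose[OF assms(1) G(1) \<Psi>(2,3)] by blast
qed

lemma is_net_retraction:
  assumes net: "is_net P B" and "inj_on q B" and q: "\<And>b. b \<in> B \<Longrightarrow> dist (q b) b \<le> \<delta>"
  obtains \<alpha> where "\<And>z. \<alpha> z \<in> B" "\<And>z. dist z (q (\<alpha> z)) \<le> P + \<delta>" "\<And>b. b \<in> B \<Longrightarrow> \<alpha> (q b) = b"
proof
  define \<alpha> where "\<alpha> z = (if z \<in> q ` B then inv_into B q z else SOME b. b \<in> B \<and> dist z b \<le> P)" for z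
  have near: "(SOME b. b \<in> B \<and> dist z b \<le> P) \<in> B \<and> dist z (SOME b. b \<in> B \<and> dist z b \<le> P) \<le> P" for z
    using net unfolding is_net_def by (metis (mono_tags, lifting) someI_ex)
  show "\<alpha> z \<in> B" for z
    using near unfolding \<alpha>_def by (auto intro: inv_into_into)
  show "\<alpha> (q b) = b" if "b \<in> B" for b
    using that \<open>inj_on q B\<close> unfolding \<alpha>_def by simp
  show "dist z (q (\<alpha> z)) \<le> P + \<delta>" for z
  proof (cases "z \<in> q ` B")
    case True
    then obtain b where b: "b \<in> B" "z = q b"
      by blast
    have "0 \<le> P" "0 \<le> \<delta>"
      using near[of z] q[OF b(1)] by (meson zero_le_dist order_trans)+
    then show ?thesis
      using b \<open>inj_on q B\<close> unfolding \<alpha>_def by simp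
  next
    case False
    let ?b = "SOME b. b \<in> B \<and> dist z b \<le> P"
    have "dist z (q ?b) \<le> dist z ?b + dist (q ?b) ?b"
      by (rule dist_triangle2)
    then show ?thesis
      using near[of z] q[of ?b] False unfolding \<alpha>_def by simp
  qed
qed

lemma interpolation_upper_bound_arith:
  fixes d m dg L D \<delta> T :: real
  assumes "1 \<le> d" "m \<le> d + 2 * D + 2 * \<delta>" "dg \<le> L * m + 2 * D"
    and "0 < L" "0 \<le> D" "0 \<le> \<delta>" "L * (2 * D + 2 * \<delta> + 1) + 2 * D \<le> T"
  shows "dg \<le> T * d"
proof -
  have L_split: "L * (2 * D + 2 * \<delta> + 1) = L * (2 * D + 2 * \<delta>) + L"
    by (simp add: distrib_left)
  have "0 \<le> L * (2 * D + 2 * \<delta>)"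
    using assms(4-6) by simp
  then have "L \<le> T"
    using assms(5,7) L_split by linarith
  have "L * m \<le> L * (d + (2 * D + 2 * \<delta>))"
    using assms(2,4) by (intro mult_left_mono) auto
  then have "dg \<le> L * (d + (2 * D + 2 * \<delta>)) + 2 * D"
    using assms(3) by linarith
  also have "\<dots> \<le> L * d + (T - L)"
    using assms(7) L_split by (simp add: distrib_left)
  also have "\<dots> \<le> L * d + (T - L) * d"
    using assms(1) \<open>L \<le> T\<close> mult_left_mono[of 1 d "T - L"] by simp
  also have "\<dots> = T * d"
    by (simp add: algebra_simps)
  finally show ?thesis .
qed

lemma interpolation_lower_bound_arith:
  fixes d m dh dg Q L D \<delta> T :: real
  assumes "d \<le> m + 2 * D + 2 * \<delta>" "Q \<le> m" "m \<le> L * dh" "T * dh \<le> T * dg + 2 * D"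
    and "0 < Q" "0 < L" "0 \<le> D" "0 \<le> \<delta>" "1 \<le> T" "2 * L * (Q + 2 * D + 2 * \<delta>) \<le> T * Q"
  shows "d \<le> T * dg"
proof -
  have "2 * L * Q \<le> 2 * L * (Q + 2 * D + 2 * \<delta>)"
    using assms(6-8) by (intro mult_left_mono) auto
  then have "2 * L \<le> T"
    using assms(5,10) by (meson mult_le_cancel_right_pos order_trans)
  then have "(T - 2 * L) * Q \<le> (T - 2 * L) * m"
    using assms(2) by (intro mult_left_mono) auto
  moreover have "0 \<le> L * \<delta>" "0 \<le> L * m"
    using assms(2,5,6,8) by simp_all
  ultimately have Tm: "L * m + 4 * (L * D) + 2 * (L * \<delta>) \<le> T * m"
    using assms(10) by (simp add: algebra_simps)
  have "T * m \<le> L * (T * dh)"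
    using assms(3,9) mult_left_mono[of m "L * dh" T] by (simp add: ac_simps)
  also have "\<dots> \<le> L * (T * dg + 2 * D)"
    using assms(4,6) by simp
  finally have "T * m \<le> L * (T * dg) + 2 * (L * D)"
    by (simp add: algebra_simps)
  moreover have "L * d \<le> L * m + 2 * (L * D) + 2 * (L * \<delta>)"
    using mult_left_mono[OF assms(1), of L] assms(6) by (simp add: algebra_simps)
  ultimately have "L * d \<le> L * (T * dg)"
    using Tm by linarith
  with assms(6) show ?thesis
    by simp
qed

definition interpolant :: "real \<Rightarrow> ('a \<Rightarrow> 'a) \<Rightarrow> ('a \<Rightarrow> 'a) \<Rightarrow> ('a \<Rightarrow> 'a) \<Rightarrow> 'a \<Rightarrow> 'a::real_normed_vector"
  where "interpolant T h \<alpha> q z = h (\<alpha> z) + (z - q (\<alpha> z)) /\<^sub>R T"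

lemma dist_interpolant_same:
  assumes "\<alpha> z = \<alpha> z'" "0 < T"
  shows "dist (interpolant T h \<alpha> q z) (interpolant T h \<alpha> q z') = dist z z' / T"
  unfolding interpolant_def dist_norm using assms
  by (simp add: algebra_simps divide_inverse_commute flip: scaleR_diff_right)

context
  fixes Z B :: "'a::real_normed_vector set" and h q \<alpha> :: "'a \<Rightarrow> 'a" and Q L D \<delta> T :: real
  assumes Z: "separated 1 Z" and B: "separated Q B" "0 < Q" and "0 < L"
    and h_le: "\<And>b b'. b \<in> B \<Longrightarrow> b' \<in> B \<Longrightarrow> dist (h b) (h b') \<le> L * dist b b'"
    and h_ge: "\<And>b b'. b \<in> B \<Longrightarrow> b' \<in> B \<Longrightarrow> dist b b' \<le> L * dist (h b) (h b')"
    and \<alpha>: "\<And>z. \<alpha> z \<in> B" "\<And>z. dist z (q (\<alpha> z)) \<le> D"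
    and q: "\<And>b. b \<in> B \<Longrightarrow> dist (q b) b \<le> \<delta>"
    and T: "1 \<le> T" "L * (2 * D + 2 * \<delta> + 1) + 2 * D \<le> T" "2 * L * (Q + 2 * D + 2 * \<delta>) \<le> T * Q"
begin

text \<open>For lattice points with different \<open>\<alpha>\<close>, the separation of \<open>B\<close> makes \<open>dist (\<alpha> z) (\<alpha> z')\<close>
  dominate all the bounded errors.\<close>
lemma interpolant_dist_bounds_distinct:
  assumes z: "z \<in> Z" "z' \<in> Z" and "\<alpha> z \<noteq> \<alpha> z'"
  defines "g \<equiv> interpolant T h \<alpha> q"
  shows "dist (g z) (g z') \<le> T * dist z z' \<and> dist z z' \<le> T * dist (g z) (g z')"
proof -
  let ?a = "\<alpha> z" and ?a' = "\<alpha> z'"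
  define m where "m = dist ?a ?a'"
  define e where "e = ((z - q ?a) - (z' - q ?a')) /\<^sub>R T"
  have "Q \<le> m"
    using B(1) \<alpha>(1) \<open>?a \<noteq> ?a'\<close> unfolding separated_def m_def by blast
  have "z \<noteq> z'"
    using \<open>?a \<noteq> ?a'\<close> by auto
  then have "1 \<le> dist z z'"
    using Z z unfolding separated_def by blast
  have D: "0 \<le> D" "0 \<le> \<delta>"
    using \<alpha>(2)[of z] q[OF \<alpha>(1)] by (meson zero_le_dist order_trans)+
  have gdiff: "g z - g z' = (h ?a - h ?a') + e"
    unfolding g_def interpolant_def e_def by (simp add: algebra_simps)
  have "T * norm e = norm ((z - q ?a) - (z' - q ?a'))"
    using T(1) unfolding e_def by simp
  then have e: "T * norm e \<le> 2 * D"
    using norm_triangle_ineq4[of "z - q ?a" "z' - q ?a'"] \<alpha>(2)[of z] \<alpha>(2)[of z']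
    unfolding dist_norm by linarith
  moreover have "norm e \<le> T * norm e"
    using T(1) mult_right_mono[of 1 T "norm e"] by simp
  ultimately have "norm e \<le> 2 * D"
    by linarith
  then have g_le: "dist (g z) (g z') \<le> L * m + 2 * D"
    using norm_triangle_ineq[of "h ?a - h ?a'" e] h_le[OF \<alpha>(1)[of z] \<alpha>(1)[of z']]
    unfolding m_def dist_norm gdiff by linarith
  have "T * dist (h ?a) (h ?a') \<le> T * (dist (g z) (g z') + norm e)"
    using gdiff norm_triangle_ineq4[of "g z - g z'" e] T(1)
    by (intro mult_left_mono) (auto simp: dist_norm)
  with e have g_ge: "T * dist (h ?a) (h ?a') \<le> T * dist (g z) (g z') + 2 * D"
    by (simp add: distrib_left)
  have h_ge': "m \<le> L * dist (h ?a) (h ?a')"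
    using h_ge[OF \<alpha>(1)[of z] \<alpha>(1)[of z']] unfolding m_def .
  have dzz: "dist z z' \<le> m + 2 * D + 2 * \<delta>" and m_le: "m \<le> dist z z' + 2 * D + 2 * \<delta>"
    using dist_triangle[of z z' "q ?a"] dist_triangle[of "q ?a" z' ?a] dist_triangle[of ?a z' ?a']
      dist_triangle[of ?a' z' "q ?a'"] dist_triangle[of ?a ?a' "q ?a"] dist_triangle[of "q ?a" ?a' z]
      dist_triangle[of z ?a' z'] dist_triangle[of z' ?a' "q ?a'"]
      \<alpha>(2)[of z] \<alpha>(2)[of z'] q[OF \<alpha>(1)[of z]] q[OF \<alpha>(1)[of z']]
    unfolding m_def by (simp_all add: dist_commute)
  show ?thesis
    using interpolation_upper_bound_arith[OF \<open>1 \<le> dist z z'\<close> m_le g_le \<open>0 < L\<close> D T(2)]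
      interpolation_lower_bound_arith[OF dzz \<open>Q \<le> m\<close> h_ge' g_ge B(2) \<open>0 < L\<close> D T(1,3)]
    by blast
qed

lemma interpolant_dist_bounds:
  assumes "z \<in> Z" "z' \<in> Z"
  defines "g \<equiv> interpolant T h \<alpha> q"
  shows "dist (g z) (g z') \<le> T * dist z z' \<and> dist z z' \<le> T * dist (g z) (g z')"
proof (cases "\<alpha> z = \<alpha> z'")
  case True
  then have g: "dist (g z) (g z') = dist z z' / T"
    unfolding g_def using T(1) by (intro dist_interpolant_same) auto
  have "dist z z' \<le> T * dist z z'"
    using T(1) mult_right_mono[of 1 T "dist z z'"] by simp
  also have "\<dots> \<le> T * (T * dist z z')"
    using T(1) mult_right_mono[of 1 T "T * dist z z'"] by simp
  finally show ?thesis
    using T(1) by (simp add: g pos_divide_le_eq mult.commute mult.left_commute)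
next
  case False
  show ?thesis
    unfolding g_def using assms(1,2) False by (rule interpolant_dist_bounds_distinct)
qed

end

lemma discretization_constants:
  fixes n P Q L T :: real
  assumes "1 \<le> n" "48 * n \<le> Q" "Q \<le> 2 * P" "1 \<le> L" "24 * P\<^sup>2 * L \<le> T"
  shows "1 \<le> T" "L * (2 * P + 2 * n + 1) + 2 * P + n \<le> T"
proof -
  have P: "24 * n \<le> P" "1 \<le> P"
    using assms(1-3) by linarith+
  then have "L * P \<le> L * P\<^sup>2" "P \<le> L * P"
    using assms(4) mult_right_mono[of 1 L P] by (simp_all add: power2_eq_square)
  moreover have "L * (2 * P + 2 * n + 1) \<le> L * (3 * P)"
    using P assms(1,4) by (intro mult_left_mono) auto
  moreover have "L * (3 * P) = 3 * (L * P)" "24 * P\<^sup>2 * L = 24 * (L * P\<^sup>2)"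
    by simp_all
  ultimately show "L * (2 * P + 2 * n + 1) + 2 * P + n \<le> T" "1 \<le> T"
    using P assms(1,5) by linarith+
qed

lemma discretization_constant_separation:
  fixes n P Q L T :: real
  assumes "1 \<le> n" "48 * n \<le> Q" "Q \<le> 2 * P" "1 \<le> L" "24 * P\<^sup>2 * L \<le> T"
  shows "2 * L * (Q + 2 * P + 2 * n) \<le> T * Q"
proof -
  have P: "24 * n \<le> P" "1 \<le> P" "1 \<le> Q"
    using assms(1-3) by linarith+
  have "P \<le> P\<^sup>2"
    using P(2) by (simp add: power2_eq_square)
  moreover from this P(2) have "1 \<le> P\<^sup>2"
    by linarith
  ultimately have "Q \<le> Q * P\<^sup>2" "P \<le> Q * P\<^sup>2"
    using P(3) mult_left_mono[of 1 "P\<^sup>2" Q] mult_right_mono[of 1 Q "P\<^sup>2"] by simp_all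
  then have "Q + 2 * P + 2 * n \<le> 4 * (Q * P\<^sup>2)"
    using P by linarith
  then have "2 * L * (Q + 2 * P + 2 * n) \<le> 2 * L * (4 * (Q * P\<^sup>2))"
    using assms(4) by (intro mult_left_mono) auto
  also have "\<dots> = (8 * P\<^sup>2 * L) * Q"
    by (simp add: algebra_simps)
  also have "\<dots> \<le> T * Q"
  proof (rule mult_right_mono)
    have "0 \<le> P\<^sup>2 * L"
      using assms(4) by simp
    then show "8 * P\<^sup>2 * L \<le> T"
      using assms(5) by linarith
  qed (use P(3) in simp)
  finally show ?thesis .
qed

lemma lattice_discretization:
  fixes B :: "'a::euclidean_space set" and h :: "'a \<Rightarrow> 'a" and Q P L T :: real
  assumes sep: "separated Q B" and net: "is_net P B" and Q: "48 * real DIM('a) \<le> Q" and "1 \<le> L"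
    and h_le: "\<And>b b'. b \<in> B \<Longrightarrow> b' \<in> B \<Longrightarrow> dist (h b) (h b') \<le> L * dist b b'"
    and h_ge: "\<And>b b'. b \<in> B \<Longrightarrow> b' \<in> B \<Longrightarrow> dist b b' \<le> L * dist (h b) (h b')"
    and T: "24 * P\<^sup>2 * L \<le> T"
  obtains g where "bilipschitz_on int_lattice g" "bilip_on int_lattice g \<le> T"
    "\<And>b. b \<in> B \<Longrightarrow> g (round_lattice b) = h b"
proof -
  let ?n = "real DIM('a)"
  have "1 \<le> ?n"
    by (simp add: Suc_le_eq)
  have "Q \<le> 2 * P"
    using sep net by (rule separated_is_net_le)
  have inj: "inj_on round_lattice B"
    using sep dist_round_lattice_le by (rule separated_inj_on) (use Q \<open>1 \<le> ?n\<close> in linarith)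
  obtain \<alpha> where \<alpha>: "\<And>z. \<alpha> z \<in> B" "\<And>z. dist z (round_lattice (\<alpha> z)) \<le> P + ?n / 2"
    "\<And>b. b \<in> B \<Longrightarrow> \<alpha> (round_lattice b) = b"
    using is_net_retraction[OF net inj dist_round_lattice_le] by blast
  define g where "g = interpolant T h \<alpha> round_lattice"
  note constants = discretization_constants[OF \<open>1 \<le> ?n\<close> Q \<open>Q \<le> 2 * P\<close> \<open>1 \<le> L\<close> T]
    discretization_constant_separation[OF \<open>1 \<le> ?n\<close> Q \<open>Q \<le> 2 * P\<close> \<open>1 \<le> L\<close> T]
  have "0 < Q" "0 < L"
    using Q \<open>1 \<le> ?n\<close> \<open>1 \<le> L\<close> by linarith+
  have T': "1 \<le> T" "L * (2 * (P + ?n / 2) + 2 * (?n / 2) + 1) + 2 * (P + ?n / 2) \<le> T"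
    "2 * L * (Q + 2 * (P + ?n / 2) + 2 * (?n / 2)) \<le> T * Q"
    using constants by (simp_all add: algebra_simps)
  have bounds: "dist (g z) (g z') \<le> T * dist z z' \<and> dist z z' \<le> T * dist (g z) (g z')"
    if "z \<in> int_lattice" "z' \<in> int_lattice" for z z'
    unfolding g_def
    by (rule interpolant_dist_bounds[OF separated_int_lattice sep \<open>0 < Q\<close> \<open>0 < L\<close> h_le h_ge
          \<alpha>(1,2) dist_round_lattice_le T' that])
  obtain z z' :: 'a where "z \<in> int_lattice" "z' \<in> int_lattice" "z \<noteq> z'"
    using is_net_int_lattice by (rule is_net_two_points) simp
  note g_bilip = bilipschitz_onI[OF this, of g T, OF conjunct1[OF bounds] conjunct2[OF bounds]]
  moreover have "g (round_lattice b) = h b" if "b \<in> B" for b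
    unfolding g_def interpolant_def using \<alpha>(3)[OF that] by simp
  ultimately show thesis
    using that by blast
qed

lemma rescaled_bilipschitz_dist_le:
  fixes f :: "'a::real_normed_vector \<Rightarrow> 'a"
  assumes f: "bilipschitz_on A f" and "0 < K" and b: "b \<in> scaleR K ` A" "b' \<in> scaleR K ` A"
  defines "h \<equiv> \<lambda>b. K *\<^sub>R f (b /\<^sub>R K)"
  shows "dist (h b) (h b') \<le> bilip_on A f * dist b b'" and "dist b b' \<le> bilip_on A f * dist (h b) (h b')"
proof -
  obtain a a' where a: "a \<in> A" "a' \<in> A" "b = K *\<^sub>R a" "b' = K *\<^sub>R a'"
    using b by blast
  have "dist (h b) (h b') = K * dist (f a) (f a')" "dist b b' = K * dist a a'"
    using a \<open>0 < K\<close> dist_scaleR_scaleR[of K] unfolding h_def by simp_all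
  then show "dist (h b) (h b') \<le> bilip_on A f * dist b b'" "dist b b' \<le> bilip_on A f * dist (h b) (h b')"
    using bilipschitz_on_dist_le[OF f a(1,2)] \<open>0 < K\<close> by (simp_all add: mult.left_commute)
qed

lemma rescaled_discretization_constant_le:
  fixes n K R L :: real
  assumes "1 \<le> n" "1 \<le> K" "0 \<le> L"
  shows "24 * (K * R)\<^sup>2 * L \<le> 24 * sqrt n * R\<^sup>2 * K ^ 3 * L"
proof -
  have "K\<^sup>2 \<le> K ^ 3"
    using assms(2) by (simp add: power_increasing)
  also have "\<dots> \<le> sqrt n * K ^ 3"
    using assms(1,2) mult_right_mono[of 1 "sqrt n" "K ^ 3"] by simp
  finally have "K\<^sup>2 * (24 * R\<^sup>2 * L) \<le> sqrt n * K ^ 3 * (24 * R\<^sup>2 * L)"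
    using assms(3) by (intro mult_right_mono) auto
  then show ?thesis
    by (simp add: power_mult_distrib ac_simps)
qed

lemma separated_net_reduction_to_lattice:
  fixes A :: "'a::euclidean_space set" and f :: "'a \<Rightarrow> 'a" and r R K :: real
  assumes r: "0 < r" "separated r A" and net: "is_net R A" and f: "bilipschitz_on A f"
    and K: "1 \<le> K" "48 * real DIM('a) \<le> K * r"
  obtains g :: "'a \<Rightarrow> 'a" where "bilipschitz_on int_lattice g"
    "bilip_on int_lattice g \<le> 24 * sqrt DIM('a) * R\<^sup>2 * K ^ 3 * bilip_on A f"
    "\<And>G. bilipschitz_on UNIV G \<Longrightarrow> (\<forall>z\<in>int_lattice. G z = g z) \<Longrightarrow>
      \<exists>F. bilipschitz_on UNIV F \<and> (\<forall>a\<in>A. F a = f a) \<and> bilip_on UNIV F \<le> 2 * bilip_on UNIV G"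
proof -
  let ?n = "real DIM('a)" and ?L = "bilip_on A f"
  have "0 < K"
    using K(1) by simp
  have "r \<le> 2 * R"
    using r(2) net by (rule separated_is_net_le)
  then have "0 < R"
    using r(1) by linarith
  with net obtain a b where "a \<in> A" "b \<in> A" "a \<noteq> b"
    by (rule is_net_two_points)
  then have "1 \<le> ?L"
    by (rule bilip_on_ge_1[OF f])
  define h where "h b = K *\<^sub>R f (b /\<^sub>R K)" for b
  note h = rescaled_bilipschitz_dist_le[OF f \<open>0 < K\<close>, folded h_def]
  have T: "24 * (K * R)\<^sup>2 * ?L \<le> 24 * sqrt ?n * R\<^sup>2 * K ^ 3 * ?L"
    using \<open>1 \<le> ?L\<close> K(1) by (intro rescaled_discretization_constant_le) (auto simp: Suc_le_eq)
  obtain g where g: "bilipschitz_on int_lattice g" "bilip_on int_lattice g \<le> 24 * sqrt ?n * R\<^sup>2 * K ^ 3 * ?L"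
    "\<And>b. b \<in> scaleR K ` A \<Longrightarrow> g (round_lattice b) = h b"
    using lattice_discretization[OF separated_scaleR[OF \<open>0 < K\<close> r(2)] is_net_scaleR[OF \<open>0 < K\<close> net]
        K(2) \<open>1 \<le> ?L\<close> h T] by blast
  show thesis
  proof (rule that[OF g(1,2)])
    fix G :: "'a \<Rightarrow> 'a"
    assume G: "bilipschitz_on UNIV G" "\<forall>z\<in>int_lattice. G z = g z"
    have round: "dist (round_lattice (K *\<^sub>R a)) (K *\<^sub>R a) \<le> K * r / 4" for a :: 'a
      using dist_round_lattice_le[of "K *\<^sub>R a"] K(2) by linarith
    have G_round: "G (round_lattice (K *\<^sub>R a)) = K *\<^sub>R f a" if "a \<in> A" for a
      using G(2) g(3)[of "K *\<^sub>R a"] that \<open>0 < K\<close> round_lattice_in_int_lattice[of "K *\<^sub>R a"]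
      unfolding h_def by simp
    show "\<exists>F. bilipschitz_on UNIV F \<and> (\<forall>a\<in>A. F a = f a) \<and> bilip_on UNIV F \<le> 2 * bilip_on UNIV G"
      by (rule rescaled_near_identity_extension[OF \<open>0 < K\<close> r round G(1) G_round])
  qed
qed

lemma net_extension_from_lattice_extension:
  fixes A :: "'a::euclidean_space set"
  assumes lattice: "\<forall>g :: 'a \<Rightarrow> 'a. bilipschitz_on int_lattice g \<longrightarrow>
      (\<exists>G. bilipschitz_on UNIV G \<and> (\<forall>z\<in>int_lattice. G z = g z))"
    and "separated_net A" "bilipschitz_on A f"
  shows "\<exists>F. bilipschitz_on UNIV F \<and> (\<forall>x\<in>A. F x = f x)"
proof -
  obtain r R where r: "0 < r" "separated r A" "is_net R A"
    using assms(2) unfolding separated_net_def by blast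
  define K where "K = max 1 (48 * real DIM('a) / r)"
  have K1: "1 \<le> K"
    unfolding K_def by simp
  have "48 * real DIM('a) = 48 * real DIM('a) / r * r"
    using r(1) by simp
  also have "\<dots> \<le> K * r"
    unfolding K_def using r(1) by (intro mult_right_mono) auto
  finally have K2: "48 * real DIM('a) \<le> K * r" .
  obtain g :: "'a \<Rightarrow> 'a" where g: "bilipschitz_on int_lattice g"
    "bilip_on int_lattice g \<le> 24 * sqrt DIM('a) * R\<^sup>2 * K ^ 3 * bilip_on A f"
    "\<And>G. bilipschitz_on UNIV G \<Longrightarrow> (\<forall>z\<in>int_lattice. G z = g z) \<Longrightarrow>
      \<exists>F. bilipschitz_on UNIV F \<and> (\<forall>a\<in>A. F a = f a) \<and> bilip_on UNIV F \<le> 2 * bilip_on UNIV G"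
    using separated_net_reduction_to_lattice[OF r assms(3) K1 K2] by blast
  obtain G where "bilipschitz_on UNIV G" "\<forall>z\<in>int_lattice. G z = g z"
    using lattice g(1) by blast
  with g(3) show ?thesis
    by blast
qed

lemma net_extension_bound_from_lattice_extension_bound:
  fixes A :: "'a::euclidean_space set" and C :: "real \<Rightarrow> real"
  assumes C: "mono_on {1..} C"
    and lattice: "\<forall>g :: 'a \<Rightarrow> 'a. bilipschitz_on int_lattice g \<longrightarrow>
      (\<exists>G. bilipschitz_on UNIV G \<and> (\<forall>z\<in>int_lattice. G z = g z) \<and> bilip_on UNIV G \<le> C (bilip_on int_lattice g))"
    and r: "0 < r" "separated r A" and net: "is_net R A" and f: "bilipschitz_on A f"
    and K: "2 \<le> K" "48 * real DIM('a) \<le> K * r"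
  shows "\<exists>F. bilipschitz_on UNIV F \<and> (\<forall>x\<in>A. F x = f x) \<and>
    bilip_on UNIV F \<le> K * C (24 * sqrt DIM('a) * R\<^sup>2 * K ^ 3 * bilip_on A f)"
proof -
  let ?T = "24 * sqrt DIM('a) * R\<^sup>2 * K ^ 3 * bilip_on A f"
  have "1 \<le> K"
    using K(1) by simp
  obtain g :: "'a \<Rightarrow> 'a" where g: "bilipschitz_on int_lattice g" "bilip_on int_lattice g \<le> ?T"
    "\<And>G. bilipschitz_on UNIV G \<Longrightarrow> (\<forall>z\<in>int_lattice. G z = g z) \<Longrightarrow>
      \<exists>F. bilipschitz_on UNIV F \<and> (\<forall>a\<in>A. F a = f a) \<and> bilip_on UNIV F \<le> 2 * bilip_on UNIV G"
    using separated_net_reduction_to_lattice[OF r net f \<open>1 \<le> K\<close> K(2)] by blast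
  obtain G where G: "bilipschitz_on UNIV G" "\<forall>z\<in>int_lattice. G z = g z"
    "bilip_on UNIV G \<le> C (bilip_on int_lattice g)"
    using lattice g(1) by blast
  obtain F where F: "bilipschitz_on UNIV F" "\<forall>a\<in>A. F a = f a" "bilip_on UNIV F \<le> 2 * bilip_on UNIV G"
    using g(3)[OF G(1,2)] by blast
  obtain z z' :: 'a where z: "z \<in> int_lattice" "z' \<in> int_lattice" "z \<noteq> z'"
    using is_net_int_lattice by (rule is_net_two_points) simp
  have "1 \<le> bilip_on UNIV G"
    using G(1) UNIV_I UNIV_I z(3) by (rule bilip_on_ge_1)
  have "1 \<le> bilip_on int_lattice g"
    using g(1) z by (rule bilip_on_ge_1)
  have "2 * bilip_on UNIV G \<le> K * bilip_on UNIV G"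
    using K(1) \<open>1 \<le> bilip_on UNIV G\<close> by (intro mult_right_mono) auto
  then have "bilip_on UNIV F \<le> K * bilip_on UNIV G"
    using F(3) by linarith
  also have "\<dots> \<le> K * C (bilip_on int_lattice g)"
    using G(3) \<open>1 \<le> K\<close> by simp
  also have "\<dots> \<le> K * C ?T"
    using \<open>1 \<le> bilip_on int_lattice g\<close> g(2) \<open>1 \<le> K\<close>
    by (intro mult_left_mono mono_onD[OF C]) auto
  finally show ?thesis
    using F(1,2) by blast
qed

theorem theorem1p1:
  fixes d :: nat
  defines "d \<equiv> DIM('a::euclidean_space)"
  shows
  "((\<forall>f :: 'a \<Rightarrow> 'a. bilipschitz_on int_lattice f \<longrightarrow>
       (\<exists>F :: 'a \<Rightarrow> 'a. bilipschitz_on UNIV F \<and> (\<forall>x\<in>int_lattice. F x = f x)))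
    \<longleftrightarrow>
    (\<forall>(A :: 'a set) (f :: 'a \<Rightarrow> 'a). separated_net A \<and> bilipschitz_on A f \<longrightarrow>
       (\<exists>F :: 'a \<Rightarrow> 'a. bilipschitz_on UNIV F \<and> (\<forall>x\<in>A. F x = f x))))
   \<and>
   (\<forall>C :: real \<Rightarrow> real.
      mono_on {1..} C \<and> (\<forall>t\<ge>1. C t \<ge> 1) \<and>
      (\<forall>f :: 'a \<Rightarrow> 'a. bilipschitz_on int_lattice f \<longrightarrow>
         (\<exists>F :: 'a \<Rightarrow> 'a. bilipschitz_on UNIV F \<and> (\<forall>x\<in>int_lattice. F x = f x) \<and>
            bilip_on UNIV F \<le> C (bilip_on int_lattice f)))
      \<longrightarrow>
      (\<forall>(A :: 'a set) (r :: real) (R :: real) (f :: 'a \<Rightarrow> 'a).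
         r > 0 \<and> R > 0 \<and> separated r A \<and> is_net R A \<and> bilipschitz_on A f \<longrightarrow>
         (let K = 16 * max (3 * real d / r) 1 in
          \<exists>F :: 'a \<Rightarrow> 'a. bilipschitz_on UNIV F \<and> (\<forall>x\<in>A. F x = f x) \<and>
            bilip_on UNIV F \<le> K * C (24 * sqrt (real d) * R\<^sup>2 * K ^ 3 * bilip_on A f))))"
proof -
  have K: "2 \<le> 16 * max (3 * real d / r) 1" "48 * real d \<le> 16 * max (3 * real d / r) 1 * r"
    if "0 < r" for r
  proof -
    have "48 * real d = 16 * (3 * real d / r) * r"
      using that by simp
    also have "\<dots> \<le> 16 * max (3 * real d / r) 1 * r"
      using that by (intro mult_right_mono) auto
    finally show "48 * real d \<le> 16 * max (3 * real d / r) 1 * r" .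
  qed simp
  show ?thesis
    unfolding Let_def d_def
  proof (intro conjI iffI allI impI)
  qed ((rule net_extension_bound_from_lattice_extension_bound; use K[unfolded d_def] in auto)
    | blast intro: net_extension_from_lattice_extension separated_net_int_lattice)+
qed

end
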